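(* Let $1\le n\le L$. The map sending $w\in\Omega'^{\{1\}}$ to the collection of sets $B_1,\dots,B_n$, where $B_i\subseteq\{1,\dots,L\}$ is the set of positions of the letters $\bullet_i$ and $\Box_i$ in $w$, is a bijection from $\Omega'^{\{1\}}$ onto the set of (unordered) set partitions of $\{1,\dots,L\}$ into exactly $n$ nonempty blocks.
   Context: Particle labels are taken modulo $n$. $\Omega_{L,n}$ is the set of words $w_1\cdots w_L$ on the ring $\mathbb{Z}/L\mathbb{Z}$ over the alphabet $\{\bullet_1,\dots,\bullet_n,\Box_1,\dots,\Box_n\}$ in which each $\bullet_k$ occurs exactly once, the $\bullet_1,\dots,\bullet_n$ appear in this cyclic order, and the remaining $L-n$ letters are arbitrary $\Box_i$'s. For $w\in\Omega_{L,n}$ let $b_k$ be the position of $\bullet_k$ and $C_k$ the set of positions strictly between $b_k$ and $b_{k+1}$ going cyclically forward ($b_{n+1}=b_1$). For $i,k\in\{1,\dots,n\}$ set $w_\Box(i,k)=p_1\cdots p_{i-1}q_{i+1}\cdots q_kp_{k+1}\cdots p_n$ if $i\le k$ and $w_\Box(i,k)=q_1\cdots q_kp_{k+1}\cdots p_{i-1}q_{i+1}\cdots q_n$ if $k<i$ (empty products are $1$), monomials in indeterminates. The weight is the monomial $\mathrm{wt}(w)=\prod_{k=1}^n\prod_{j\in C_k}w_\Box(i_j,k)$ where $w_j=\Box_{i_j}$. $\Omega'^{\{1\}}$ is the set of $w\in\Omega_{L,n}$ with $w_1=\bullet_1$ whose weight monomial does not contain $q_1$ (i.e. $\mathrm{wt}(w)\ne0$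 when $q_1=0$ and all other rates are positive). *)

theory Defs
  imports Main "HOL-Library.Disjoint_Sets"
begin

text \<open>Letters: Bullet k stands for the particle letter with label k, Box i for the
  vacancy letter with label i (labels range over 1..n).\<close>
datatype letter = Bullet nat | Box nat

text \<open>Indeterminates p_i, q_i.  A monomial is represented by its exponent vector.\<close>
datatype var = p nat | q nat

type_synonym monomial = "var \<Rightarrow> nat"

definition letter_at :: "letter list \<Rightarrow> nat \<Rightarrow> letter" where
  "letter_at w j = w ! (j - 1)"

definition valid_letter :: "nat \<Rightarrow> letter \<Rightarrow> bool" where
  "valid_letter n c \<longleftrightarrow> (case c of Bullet k \<Rightarrow> 1 \<le> k \<and> k \<le> n | Box i \<Rightarrow> 1 \<le> i \<and> i \<le> n)"

definition bpos :: "nat \<Rightarrow> letter list \<Rightarrow> nat \<Rightarrow> nat" where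
  "bpos L w k = (THE j. j \<in> {1..L} \<and> letter_at w j = Bullet k)"

text \<open>Next label modulo n (labels 1..n), so that b_{n+1} = b_1.\<close>
definition next_lab :: "nat \<Rightarrow> nat \<Rightarrow> nat" where
  "next_lab n k = (if k = n then 1 else k + 1)"

definition Omega :: "nat \<Rightarrow> nat \<Rightarrow> letter list set" where
  "Omega L n = {w. length w = L \<and> (\<forall>c \<in> set w. valid_letter n c)
     \<and> (\<forall>k \<in> {1..n}. card {j \<in> {1..L}. letter_at w j = Bullet k} = 1)
     \<and> (\<forall>k \<in> {1..<n}. (int (bpos L w k) - int (bpos L w 1)) mod int L
                       < (int (bpos L w (k+1)) - int (bpos L w 1)) mod int L)}"

text \<open>C_k: positions strictly between b_k and b_{k+1}, going cyclically forward
  (for n = 1 this is every position other than b_1).\<close>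
definition gap :: "nat \<Rightarrow> nat \<Rightarrow> letter list \<Rightarrow> nat \<Rightarrow> nat set" where
  "gap L n w k = {j \<in> {1..L}.
     let d = (int (bpos L w (next_lab n k)) - int (bpos L w k)) mod int L;
         d' = (if d = 0 then int L else d);
         e = (int j - int (bpos L w k)) mod int L
     in 0 < e \<and> e < d'}"

definition wbox :: "nat \<Rightarrow> nat \<Rightarrow> nat \<Rightarrow> monomial" where
  "wbox n i k v =
     (if i \<le> k then
        (case v of p m \<Rightarrow> (if (1 \<le> m \<and> m \<le> i - 1) \<or> (k + 1 \<le> m \<and> m \<le> n) then 1 else 0)
                 | q m \<Rightarrow> (if i + 1 \<le> m \<and> m \<le> k then 1 else 0))
      else
        (case v of q m \<Rightarrow> (if (1 \<le> m \<and> m \<le> k) \<or> (i + 1 \<le> m \<and> m \<le> n) then 1 else 0)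
                 | p m \<Rightarrow> (if k + 1 \<le> m \<and> m \<le> i - 1 then 1 else 0)))"

text \<open>Exponent vector of wt(w) = prod_k prod_{j in C_k} w_Box(i_j, k).\<close>
definition wt :: "nat \<Rightarrow> nat \<Rightarrow> letter list \<Rightarrow> monomial" where
  "wt L n w v = (\<Sum>k\<in>{1..n}. \<Sum>j\<in>gap L n w k.
      (case letter_at w j of Box i \<Rightarrow> wbox n i k v | Bullet _ \<Rightarrow> 0))"

definition Omega'1 :: "nat \<Rightarrow> nat \<Rightarrow> letter list set" where
  "Omega'1 L n = {w \<in> Omega L n. letter_at w 1 = Bullet 1 \<and> wt L n w (q 1) = 0}"

definition block :: "nat \<Rightarrow> letter list \<Rightarrow> nat \<Rightarrow> nat set" where
  "block L w i = {j \<in> {1..L}. letter_at w j = Bullet i \<or> letter_at w j = Box i}"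

definition blocks :: "nat \<Rightarrow> nat \<Rightarrow> letter list \<Rightarrow> nat set set" where
  "blocks L n w = block L w ` {1..n}"

end

theory Submission
  imports Defs
begin

text \<open>
  The condition that the weight of w avoids q_1 says exactly that every letter Box_i stands to
  the right of Bullet_i: a box in the gap C_k after Bullet_k contributes w_Box(i,k), which contains
  q_1 iff i > k, i.e. iff Bullet_i lies beyond that gap.  Since moreover Bullet_1 sits at position 1
  and the bullets appear in increasing order, Bullet_i marks the minimum of the block B_i and
  the labels number the blocks by increasing minimum.  Conversely, a partition into n blocks is
  encoded by numbering its blocks by increasing minimum, writing a bullet at each minimum and
  boxes elsewhere.
\<close>

fun label :: "letter \<Rightarrow> nat" where
  "label (Bullet k) = k"
| "label (Box i) = i"

lemma valid_letter_iff_label: "valid_letter n c \<longleftrightarrow> label c \<in> {1..n}"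
  by (cases c) (auto simp: valid_letter_def)

lemma block_eq_label: "block L w i = {j \<in> {1..L}. label (letter_at w j) = i}"
  unfolding block_def by (metis label.simps letter.exhaust)

lemma letter_at_in_set: "j \<in> {1..length w} \<Longrightarrow> letter_at w j \<in> set w"
  unfolding letter_at_def by auto

lemma letter_at_eqI:
  assumes "length v = length w" and "\<And>j. j \<in> {1..length w} \<Longrightarrow> letter_at v j = letter_at w j"
  shows "v = w"
proof (rule nth_equalityI)
  fix x assume "x < length v"
  then have "Suc x \<in> {1..length w}"
    using assms(1) by simp
  then show "v ! x = w ! x"
    using assms(2) unfolding letter_at_def by fastforce
qed (fact assms(1))

section \<open>Gaps on the ring and the weight condition\<close>

lemma int_diff_mod:
  assumes "x \<in> {1..L}" and "y \<in> {1..L}"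
  shows "(int x - int y) mod int L = (if y \<le> x then int x - int y else int x - int y + int L)"
proof (cases "y \<le> x")
  case False
  have "(int x - int y) mod int L = (int x - int y + int L) mod int L" by simp
  also have "\<dots> = int x - int y + int L" using assms False by (intro mod_pos_pos_trivial) auto
  finally show ?thesis using False by simp
qed (use assms in simp)

lemma int_pred_mod: "x \<in> {1..L} \<Longrightarrow> (int x - 1) mod int L = int x - 1"
  using int_diff_mod[of x L 1] by auto

text \<open>The left-hand side is the defining condition of gap: j lies strictly inside the
  cyclic interval from x to y, which is the whole ring except x when y = x.\<close>

lemma cyclic_interval_iff:
  assumes j: "j \<in> {1..L}" and x: "x \<in> {1..L}" and y: "y \<in> {1..L}"
  shows "(0 < (int j - int x) mod int L \<and>
          (int j - int x) mod int L < (if (int y - int x) mod int L = 0 then int L else (int y - int x) mod int L))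
     \<longleftrightarrow> (if x < y then x < j \<and> j < y else x < j \<or> j < y)"
  using j x y unfolding int_diff_mod[OF j x] int_diff_mod[OF y x] by auto

lemma mem_gap_iff_cyclic:
  assumes "j \<in> {1..L}" and "bpos L w k \<in> {1..L}" and "bpos L w (next_lab n k) \<in> {1..L}"
  shows "j \<in> gap L n w k \<longleftrightarrow>
    (if bpos L w k < bpos L w (next_lab n k)
     then bpos L w k < j \<and> j < bpos L w (next_lab n k)
     else bpos L w k < j \<or> j < bpos L w (next_lab n k))"
  using assms cyclic_interval_iff[OF assms] unfolding gap_def Let_def by simp

lemma bullet_positions_eq:
  assumes "card {j \<in> {1..L}. letter_at w j = Bullet k} = 1"
  shows "{j \<in> {1..L}. letter_at w j = Bullet k} = {bpos L w k}"
proof -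
  obtain x where x: "{j \<in> {1..L}. letter_at w j = Bullet k} = {x}"
    using assms by (rule card_1_singletonE)
  then have "bpos L w k = x" unfolding bpos_def by (intro the_equality) blast+
  with x show ?thesis by simp
qed

lemma wbox_q1_eq_0_iff: "1 \<le> i \<Longrightarrow> 1 \<le> k \<Longrightarrow> wbox n i k (q 1) = 0 \<longleftrightarrow> i \<le> k"
  unfolding wbox_def by auto

lemma wt_q1_eq_0_iff:
  "wt L n w (q 1) = 0 \<longleftrightarrow>
     (\<forall>k\<in>{1..n}. \<forall>j\<in>gap L n w k. \<forall>i. letter_at w j = Box i \<longrightarrow> wbox n i k (q 1) = 0)"
proof -
  have "finite (gap L n w k)" for k
    unfolding gap_def by simp
  moreover have "(case c of Box i \<Rightarrow> wbox n i k (q 1) | Bullet _ \<Rightarrow> 0) = 0 \<longleftrightarrow>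
      (\<forall>i. c = Box i \<longrightarrow> wbox n i k (q 1) = 0)" for c k
    by (cases c) simp_all
  ultimately show ?thesis
    unfolding wt_def by simp
qed

lemma Omega_bullets:
  assumes "w \<in> Omega L n" and "k \<in> {1..n}"
  shows "{j \<in> {1..L}. letter_at w j = Bullet k} = {bpos L w k}"
proof -
  have "card {j \<in> {1..L}. letter_at w j = Bullet k} = 1"
    using assms unfolding Omega_def by blast
  then show ?thesis
    by (rule bullet_positions_eq)
qed

lemma Omega_bullet_label:
  assumes "w \<in> Omega L n" and "j \<in> {1..L}" and "letter_at w j = Bullet k"
  shows "k \<in> {1..n}"
proof -
  have "length w = L" and valid: "\<forall>c\<in>set w. valid_letter n c"
    using assms(1) unfolding Omega_def by blast+
  then have "letter_at w j \<in> set w"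
    using letter_at_in_set assms(2) by simp
  then show ?thesis
    using valid assms(3) valid_letter_iff_label by fastforce
qed

section \<open>Ranking by a key and blocks of a partition\<close>

definition rank_by :: "('a \<Rightarrow> 'b::linorder) \<Rightarrow> 'a set \<Rightarrow> 'a \<Rightarrow> nat" where
  "rank_by f A x = card {y \<in> A. f y \<le> f x}"

lemma rank_by_less_iff:
  assumes "finite A" and "x \<in> A" and "y \<in> A"
  shows "rank_by f A x < rank_by f A y \<longleftrightarrow> f x < f y"
proof
  assume less: "f x < f y"
  then have "{z \<in> A. f z \<le> f x} \<subseteq> {z \<in> A. f z \<le> f y}"
    by auto
  moreover have "y \<in> {z \<in> A. f z \<le> f y}" and "y \<notin> {z \<in> A. f z \<le> f x}"
    using assms(3) less by auto
  ultimately have "{z \<in> A. f z \<le> f x} \<subset> {z \<in> A. f z \<le> f y}"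
    by blast
  then show "rank_by f A x < rank_by f A y"
    unfolding rank_by_def using assms(1) by (simp add: psubset_card_mono)
next
  assume less: "rank_by f A x < rank_by f A y"
  show "f x < f y"
  proof (rule ccontr)
    assume "\<not> f x < f y"
    then have "{z \<in> A. f z \<le> f y} \<subseteq> {z \<in> A. f z \<le> f x}"
      by auto
    then have "rank_by f A y \<le> rank_by f A x"
      unfolding rank_by_def using assms(1) by (simp add: card_mono)
    with less show False
      by simp
  qed
qed

lemma rank_by_mem:
  assumes "finite A" and "x \<in> A"
  shows "rank_by f A x \<in> {1..card A}"
proof -
  have "x \<in> {y \<in> A. f y \<le> f x}"
    using assms(2) by simp
  then have "0 < rank_by f A x"
    unfolding rank_by_def using assms(1) by (subst card_gt_0_iff) auto
  moreover have "rank_by f A x \<le> card A"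
    unfolding rank_by_def using assms(1) by (simp add: card_mono)
  ultimately show ?thesis
    by simp
qed

lemma bij_betw_rank_by:
  assumes "finite A" and "inj_on f A"
  shows "bij_betw (rank_by f A) A {1..card A}"
proof -
  have inj: "inj_on (rank_by f A) A"
  proof (rule inj_onI)
    fix x y assume x: "x \<in> A" and y: "y \<in> A" and eq: "rank_by f A x = rank_by f A y"
    then have "\<not> f x < f y" and "\<not> f y < f x"
      using rank_by_less_iff[OF assms(1) x y, of f] rank_by_less_iff[OF assms(1) y x, of f] by simp_all
    then have "f x = f y"
      by (intro antisym) (simp_all add: not_less)
    then show "x = y"
      using assms(2) x y by (simp add: inj_on_eq_iff)
  qed
  moreover have "rank_by f A ` A = {1..card A}"
  proof (rule card_subset_eq)
    show "rank_by f A ` A \<subseteq> {1..card A}"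
      using rank_by_mem[OF assms(1)] by blast
    show "card (rank_by f A ` A) = card {1..card A}"
      using card_image[OF inj] by simp
  qed simp
  ultimately show ?thesis
    unfolding bij_betw_def ..
qed

lemma rank_by_image:
  assumes "inj_on g A"
  shows "rank_by f (g ` A) (g x) = rank_by (f \<circ> g) A x"
proof -
  have "{y \<in> g ` A. f y \<le> f (g x)} = g ` {a \<in> A. f (g a) \<le> f (g x)}"
    by blast
  moreover have "inj_on g {a \<in> A. f (g a) \<le> f (g x)}"
    using assms by (rule inj_on_subset) blast
  ultimately show ?thesis
    unfolding rank_by_def by (simp add: card_image)
qed

definition block_of :: "'a set set \<Rightarrow> 'a \<Rightarrow> 'a set" where
  "block_of P x = (THE B. B \<in> P \<and> x \<in> B)"

context
  fixes A :: "'a set" and P :: "'a set set"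
  assumes P: "partition_on A P"
begin

lemma block_of_eq:
  assumes B: "B \<in> P" and x: "x \<in> B"
  shows "block_of P x = B"
  unfolding block_of_def
proof (rule the_equality)
  fix B' assume B': "B' \<in> P \<and> x \<in> B'"
  show "B' = B"
  proof (rule ccontr)
    assume "B' \<noteq> B"
    then have "B' \<inter> B = {}"
      using disjointD[OF partition_onD2[OF P]] B B' by blast
    with x B' show False
      by blast
  qed
qed (use B x in blast)

lemma block_of_in:
  assumes "x \<in> A"
  shows "block_of P x \<in> P" and "x \<in> block_of P x"
proof -
  obtain B where "B \<in> P" and "x \<in> B"
    using assms partition_onD1[OF P] by blast
  then show "block_of P x \<in> P" and "x \<in> block_of P x"
    using block_of_eq by simp_all
qed

lemma partition_block_subset: "B \<in> P \<Longrightarrow> B \<subseteq> A"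
  using partition_onD1[OF P] by blast

end

context
  fixes A :: "'a::linorder set" and P :: "'a set set"
  assumes P: "partition_on A P" and finite: "finite A"
begin

lemma finite_partition_block: "B \<in> P \<Longrightarrow> finite B"
  using partition_block_subset[OF P] finite by (rule finite_subset)

lemma Min_in_partition_block:
  assumes "B \<in> P"
  shows "Min B \<in> B"
proof -
  have "B \<noteq> {}"
    using partition_onD3[OF P] assms by blast
  then show ?thesis
    using finite_partition_block[OF assms] by (rule Min_in[rotated])
qed

lemma inj_on_Min_partition: "inj_on Min P"
proof (rule inj_onI)
  fix B B' assume B: "B \<in> P" and B': "B' \<in> P" and eq: "Min B = Min B'"
  have "block_of P (Min B) = B"
    using block_of_eq[OF P B Min_in_partition_block[OF B]] .
  moreover have "block_of P (Min B) = B'"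
    using block_of_eq[OF P B'] Min_in_partition_block[OF B'] eq by simp
  ultimately show "B = B'"
    by simp
qed

end

section \<open>Words with increasing bullets\<close>

locale bullet_word =
  fixes L n :: nat and w :: "letter list" and b :: "nat \<Rightarrow> nat"
  assumes n_pos: "1 \<le> n"
    and length_w: "length w = L"
    and valid_letters: "c \<in> set w \<Longrightarrow> valid_letter n c"
    and b_mem: "k \<in> {1..n} \<Longrightarrow> b k \<in> {1..L}"
    and letter_at_b: "k \<in> {1..n} \<Longrightarrow> letter_at w (b k) = Bullet k"
    and bullet_at_b: "j \<in> {1..L} \<Longrightarrow> letter_at w j = Bullet k \<Longrightarrow> j = b k"
    and b_1: "b 1 = 1"
    and b_Suc: "k \<in> {1..<n} \<Longrightarrow> b k < b (Suc k)"
begin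

lemma label_mem: "j \<in> {1..L} \<Longrightarrow> label (letter_at w j) \<in> {1..n}"
  using valid_letters letter_at_in_set length_w by (simp add: valid_letter_iff_label)

lemma b_less_b:
  assumes "1 \<le> k" and "k < k'" and "k' \<le> n"
  shows "b k < b k'"
  using assms(2,3)
proof (induction k')
  case (Suc m)
  have "b m < b (Suc m)"
    using b_Suc assms(1) Suc.prems by simp
  then show ?case
    using Suc by (cases "k = m") auto
qed simp

lemma b_less_b_iff: "k \<in> {1..n} \<Longrightarrow> k' \<in> {1..n} \<Longrightarrow> b k < b k' \<longleftrightarrow> k < k'"
  using b_less_b by (metis atLeastAtMost_iff less_asym' linorder_neqE_nat)

lemma b_le_b_iff: "k \<in> {1..n} \<Longrightarrow> k' \<in> {1..n} \<Longrightarrow> b k \<le> b k' \<longleftrightarrow> k \<le> k'"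
  using b_less_b_iff by (meson not_le)

lemma bpos_eq: "k \<in> {1..n} \<Longrightarrow> bpos L w k = b k"
  unfolding bpos_def using b_mem letter_at_b bullet_at_b by (intro the_equality) blast+

lemma mem_gap_iff:
  assumes k: "k \<in> {1..n}" and j: "j \<in> {1..L}"
  shows "j \<in> gap L n w k \<longleftrightarrow> b k < j \<and> (k < n \<longrightarrow> j < b (Suc k))"
proof (cases "k < n")
  case True
  then have "next_lab n k = Suc k" and Suc_k: "Suc k \<in> {1..n}"
    using k by (auto simp: next_lab_def)
  moreover have "b k < b (Suc k)"
    using b_Suc k True by simp
  ultimately show ?thesis
    using mem_gap_iff_cyclic[OF j] b_mem bpos_eq k True by simp
next
  case False
  then have "next_lab n k = 1"
    using k by (simp add: next_lab_def)
  moreover have "bpos L w 1 = 1"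
    using bpos_eq[of 1] b_1 n_pos by simp
  ultimately show ?thesis
    using mem_gap_iff_cyclic[OF j] b_mem[OF k] bpos_eq[OF k] False j by simp
qed

lemma gap_cover:
  assumes j: "j \<in> {1..L}" and box: "letter_at w j = Box i"
  obtains k where "k \<in> {1..n}" and "j \<in> gap L n w k"
proof -
  define K where "K = {k \<in> {1..n}. b k < j}"
  define k where "k = Max K"
  have "j \<noteq> 1"
    using box letter_at_b[of 1] b_1 n_pos by auto
  then have "1 \<in> K"
    unfolding K_def using j b_1 n_pos by auto
  moreover have "finite K"
    unfolding K_def by simp
  ultimately have k: "k \<in> K" and k_max: "\<And>k'. k' \<in> K \<Longrightarrow> k' \<le> k"
    unfolding k_def using Max_in by auto
  have "j < b (Suc k)" if "k < n"
  proof -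
    have "Suc k \<in> {1..n}" and "Suc k \<notin> K"
      using k k_max that by (fastforce simp: K_def)+
    moreover have "b (Suc k) \<noteq> j"
      using box letter_at_b[of "Suc k"] that by auto
    ultimately show ?thesis
      unfolding K_def by auto
  qed
  then show thesis
    using that k j mem_gap_iff unfolding K_def by blast
qed

lemma label_le_iff_in_gap:
  assumes k: "k \<in> {1..n}" and j: "j \<in> gap L n w k" and box: "letter_at w j = Box i"
  shows "i \<le> k \<longleftrightarrow> b i < j"
proof -
  have j_mem: "j \<in> {1..L}"
    using j unfolding gap_def by blast
  then have i: "i \<in> {1..n}"
    using label_mem box by fastforce
  have gap: "b k < j" "k < n \<Longrightarrow> j < b (Suc k)"
    using mem_gap_iff[OF k j_mem] j by auto
  show ?thesis
  proof
    assume "i \<le> k"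
    then show "b i < j"
      using b_le_b_iff[OF i k] gap(1) by simp
  next
    assume "b i < j"
    show "i \<le> k"
    proof (rule ccontr)
      assume "\<not> i \<le> k"
      then have "b (Suc k) \<le> b i"
        using b_le_b_iff[of "Suc k" i] i k by simp
      with \<open>b i < j\<close> gap(2) \<open>\<not> i \<le> k\<close> i show False by simp
    qed
  qed
qed

lemma wt_q1_eq_0_iff_boxes_after_bullets:
  "wt L n w (q 1) = 0 \<longleftrightarrow> (\<forall>j\<in>{1..L}. \<forall>i. letter_at w j = Box i \<longrightarrow> b i < j)"
proof -
  have gap_mem: "j \<in> {1..L}" if "j \<in> gap L n w k" for j k
    using that unfolding gap_def by blast
  have wbox_iff: "wbox n i k (q 1) = 0 \<longleftrightarrow> b i < j"
    if k: "k \<in> {1..n}" and j: "j \<in> gap L n w k" and box: "letter_at w j = Box i" for i j k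
  proof -
    have "1 \<le> i"
      using label_mem[OF gap_mem[OF j]] box by simp
    with k have "wbox n i k (q 1) = 0 \<longleftrightarrow> i \<le> k"
      by (intro wbox_q1_eq_0_iff) auto
    also have "\<dots> \<longleftrightarrow> b i < j"
      by (rule label_le_iff_in_gap[OF k j box])
    finally show ?thesis .
  qed
  show ?thesis
    unfolding wt_q1_eq_0_iff
  proof (intro iffI ballI allI impI)
    fix j i
    assume all: "\<forall>k\<in>{1..n}. \<forall>j\<in>gap L n w k. \<forall>i. letter_at w j = Box i \<longrightarrow> wbox n i k (q 1) = 0"
      and j: "j \<in> {1..L}" and box: "letter_at w j = Box i"
    obtain k where "k \<in> {1..n}" and "j \<in> gap L n w k"
      using gap_cover[OF j box] .
    then show "b i < j"
      using all box wbox_iff by blast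
  next
    fix k j i
    assume "\<forall>j\<in>{1..L}. \<forall>i. letter_at w j = Box i \<longrightarrow> b i < j"
      and "k \<in> {1..n}" and "j \<in> gap L n w k" and "letter_at w j = Box i"
    then show "wbox n i k (q 1) = 0"
      using wbox_iff gap_mem by blast
  qed
qed

lemma bullets_eq: "k \<in> {1..n} \<Longrightarrow> {j \<in> {1..L}. letter_at w j = Bullet k} = {b k}"
  using b_mem letter_at_b bullet_at_b by blast

lemma in_Omega: "w \<in> Omega L n"
proof -
  have shift: "(int (b k) - 1) mod int L = int (b k) - 1" if "k \<in> {1..n}" for k
    using int_pred_mod b_mem[OF that] by simp
  have "(int (bpos L w k) - int (bpos L w 1)) mod int L
          < (int (bpos L w (k + 1)) - int (bpos L w 1)) mod int L" if k: "k \<in> {1..<n}" for k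
  proof -
    have "k \<in> {1..n}" "k + 1 \<in> {1..n}" "1 \<in> {1..n}"
      using k by auto
    then show ?thesis
      using bpos_eq b_1 shift b_Suc[OF k] by simp
  qed
  moreover have "\<forall>k\<in>{1..n}. card {j \<in> {1..L}. letter_at w j = Bullet k} = 1"
    using bullets_eq by simp
  ultimately show ?thesis
    unfolding Omega_def using length_w valid_letters by blast
qed

lemma in_Omega'1_iff:
  "w \<in> Omega'1 L n \<longleftrightarrow> (\<forall>j\<in>{1..L}. \<forall>i. letter_at w j = Box i \<longrightarrow> b i < j)"
proof -
  have "letter_at w 1 = Bullet 1"
    using letter_at_b[of 1] b_1 n_pos by simp
  then show ?thesis
    unfolding Omega'1_def mem_Collect_eq wt_q1_eq_0_iff_boxes_after_bullets
    using in_Omega by blast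
qed

end

locale canonical_word = bullet_word +
  assumes box_after_bullet: "j \<in> {1..L} \<Longrightarrow> letter_at w j = Box i \<Longrightarrow> b i < j"
begin

lemma in_Omega'1: "w \<in> Omega'1 L n"
  using in_Omega'1_iff box_after_bullet by blast

lemma b_mem_block: "i \<in> {1..n} \<Longrightarrow> b i \<in> block L w i"
  unfolding block_def using b_mem letter_at_b by blast

lemma Min_block:
  assumes i: "i \<in> {1..n}"
  shows "Min (block L w i) = b i"
proof (rule Min_eqI)
  show "finite (block L w i)"
    unfolding block_def by simp
  show "b i \<in> block L w i"
    using b_mem_block i .
  fix j assume "j \<in> block L w i"
  then show "b i \<le> j"
    unfolding block_def using bullet_at_b box_after_bullet by fastforce
qed

lemma inj_on_block: "inj_on (block L w) {1..n}"
proof (rule inj_onI)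
  fix i i' assume i: "i \<in> {1..n}" and i': "i' \<in> {1..n}" and eq: "block L w i = block L w i'"
  then have "b i = b i'"
    using Min_block[OF i] Min_block[OF i'] by simp
  then show "i = i'"
    using b_less_b_iff[OF i i'] b_less_b_iff[OF i' i] by simp
qed

lemma card_blocks: "card (blocks L n w) = n"
  unfolding blocks_def using inj_on_block by (simp add: card_image)

lemma partition_on_blocks: "partition_on {1..L} (blocks L n w)"
proof (rule partition_onI)
  show "\<Union> (blocks L n w) = {1..L}"
    unfolding blocks_def block_eq_label using label_mem by blast
  show "disjnt B B'" if "B \<in> blocks L n w" "B' \<in> blocks L n w" "B \<noteq> B'" for B B'
    using that unfolding blocks_def block_eq_label disjnt_def by auto
  show "{} \<notin> blocks L n w"
    unfolding blocks_def using b_mem_block by blast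
qed

end

lemma Omega'1_bullet_word:
  assumes n: "1 \<le> n" and w: "w \<in> Omega'1 L n"
  shows "bullet_word L n w (bpos L w)"
proof -
  have w_Omega: "w \<in> Omega L n" and first: "letter_at w 1 = Bullet 1"
    using w unfolding Omega'1_def by blast+
  then have length_w: "length w = L" and valid: "\<forall>c\<in>set w. valid_letter n c"
    and order: "\<forall>k\<in>{1..<n}. (int (bpos L w k) - int (bpos L w 1)) mod int L
                   < (int (bpos L w (k + 1)) - int (bpos L w 1)) mod int L"
    unfolding Omega_def by blast+
  note bullets = Omega_bullets[OF w_Omega]
  have bullets_1: "{j \<in> {1..L}. letter_at w j = Bullet 1} = {bpos L w 1}"
    using bullets n by simp
  then have "bpos L w 1 \<in> {1..L}"
    by blast
  then have "1 \<in> {1..L}"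
    by simp
  with first have "1 \<in> {bpos L w 1}"
    unfolding bullets_1[symmetric] by simp
  then have b_1: "bpos L w 1 = 1"
    by simp
  show ?thesis
  proof unfold_locales
    show "bpos L w k \<in> {1..L}" "letter_at w (bpos L w k) = Bullet k" if "k \<in> {1..n}" for k
      using bullets[OF that] by blast+
    show "j = bpos L w k" if "j \<in> {1..L}" "letter_at w j = Bullet k" for j k
      using bullets[OF Omega_bullet_label[OF w_Omega that]] that by blast
    show "bpos L w k < bpos L w (Suc k)" if k: "k \<in> {1..<n}" for k
    proof -
      have "(int (bpos L w k') - 1) mod int L = int (bpos L w k') - 1" if "k' \<in> {1..n}" for k'
        using int_pred_mod bullets[OF that] by blast
      then show ?thesis
        using order k b_1 by simp
    qed
  qed (use n length_w valid b_1 in auto)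
qed

lemma Omega'1_iff_canonical_word:
  assumes "1 \<le> n"
  shows "w \<in> Omega'1 L n \<longleftrightarrow> canonical_word L n w (bpos L w)"
proof
  assume w: "w \<in> Omega'1 L n"
  then have bullets: "bullet_word L n w (bpos L w)"
    using Omega'1_bullet_word assms by blast
  show "canonical_word L n w (bpos L w)"
  proof (rule canonical_word.intro[OF bullets], unfold_locales)
    show "bpos L w i < j" if "j \<in> {1..L}" and "letter_at w j = Box i" for j i
      using w bullet_word.in_Omega'1_iff[OF bullets] that by blast
  qed
qed (rule canonical_word.in_Omega'1)

section \<open>From partitions to words\<close>

definition partition_letter :: "nat set set \<Rightarrow> nat \<Rightarrow> letter" where
  "partition_letter P j =
     (let B = block_of P j in (if j = Min B then Bullet else Box) (rank_by Min P B))"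

definition word_of_partition :: "nat \<Rightarrow> nat set set \<Rightarrow> letter list" where
  "word_of_partition L P = map (partition_letter P) [1..<Suc L]"

definition block_of_rank :: "nat set set \<Rightarrow> nat \<Rightarrow> nat set" where
  "block_of_rank P = inv_into P (rank_by Min P)"

lemma length_word_of_partition: "length (word_of_partition L P) = L"
  unfolding word_of_partition_def by simp

lemma letter_at_word_of_partition:
  assumes "j \<in> {1..L}"
  shows "letter_at (word_of_partition L P) j = partition_letter P j"
proof -
  have "j - 1 < length [1..<Suc L]"
    using assms by auto
  then have "word_of_partition L P ! (j - 1) = partition_letter P ([1..<Suc L] ! (j - 1))"
    unfolding word_of_partition_def by (rule nth_map)
  moreover have "[1..<Suc L] ! (j - 1) = j"
    using assms by (subst nth_upt) auto
  ultimately show ?thesis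
    unfolding letter_at_def by simp
qed

lemma partition_letter_eq_Bullet_iff:
  "partition_letter P j = Bullet k \<longleftrightarrow> j = Min (block_of P j) \<and> rank_by Min P (block_of P j) = k"
  unfolding partition_letter_def Let_def by simp

lemma partition_letter_eq_Box_iff:
  "partition_letter P j = Box i \<longleftrightarrow> j \<noteq> Min (block_of P j) \<and> rank_by Min P (block_of P j) = i"
  unfolding partition_letter_def Let_def by simp

lemma label_partition_letter: "label (partition_letter P j) = rank_by Min P (block_of P j)"
  unfolding partition_letter_def Let_def by simp

context canonical_word
begin

lemma block_of_blocks:
  assumes "j \<in> {1..L}"
  shows "block_of (blocks L n w) j = block L w (label (letter_at w j))"
proof (rule block_of_eq[OF partition_on_blocks])
  show "block L w (label (letter_at w j)) \<in> blocks L n w"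
    unfolding blocks_def using label_mem[OF assms] by blast
  show "j \<in> block L w (label (letter_at w j))"
    unfolding block_eq_label using assms by simp
qed

lemma rank_block:
  assumes i: "i \<in> {1..n}"
  shows "rank_by Min (blocks L n w) (block L w i) = i"
proof -
  have "rank_by Min (blocks L n w) (block L w i) = rank_by (Min \<circ> block L w) {1..n} i"
    unfolding blocks_def by (rule rank_by_image[OF inj_on_block])
  also have "\<dots> = card {i' \<in> {1..n}. b i' \<le> b i}"
    unfolding rank_by_def comp_def using Min_block i by (intro arg_cong[where f = card]) auto
  also have "{i' \<in> {1..n}. b i' \<le> b i} = {1..i}"
    using b_le_b_iff[OF _ i] i by auto
  finally show ?thesis
    by simp
qed

lemma word_of_partition_blocks: "word_of_partition L (blocks L n w) = w"
proof (rule letter_at_eqI)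
  show "length (word_of_partition L (blocks L n w)) = length w"
    using length_word_of_partition length_w by simp
  fix j assume "j \<in> {1..length w}"
  then have j: "j \<in> {1..L}"
    using length_w by simp
  define i where "i = label (letter_at w j)"
  have i_mem: "i \<in> {1..n}"
    unfolding i_def using label_mem[OF j] .
  have "partition_letter (blocks L n w) j = (if j = b i then Bullet else Box) i"
    unfolding partition_letter_def Let_def block_of_blocks[OF j] i_def[symmetric]
      Min_block[OF i_mem] rank_block[OF i_mem] ..
  also have "\<dots> = letter_at w j"
  proof (cases "letter_at w j")
    case (Bullet k)
    then show ?thesis
      using bullet_at_b[OF j] i_def by simp
  next
    case (Box k)
    then show ?thesis
      using box_after_bullet[OF j] i_def by simp
  qed
  finally show "letter_at (word_of_partition L (blocks L n w)) j = letter_at w j"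
    using letter_at_word_of_partition[OF j] by simp
qed

end

context
  fixes L :: nat and P :: "nat set set"
  assumes P: "partition_on {1..L} P"
begin

lemma bij_betw_rank_by_Min: "bij_betw (rank_by Min P) P {1..card P}"
  using bij_betw_rank_by finite_elements[OF finite_atLeastAtMost P] inj_on_Min_partition[OF P] by simp

lemma block_of_rank_in: "k \<in> {1..card P} \<Longrightarrow> block_of_rank P k \<in> P"
  unfolding block_of_rank_def using bij_betw_rank_by_Min by (metis bij_betw_def inv_into_into)

lemma rank_block_of_rank: "k \<in> {1..card P} \<Longrightarrow> rank_by Min P (block_of_rank P k) = k"
  unfolding block_of_rank_def using bij_betw_rank_by_Min by (simp add: bij_betw_inv_into_right)

lemma block_of_rank_rank: "B \<in> P \<Longrightarrow> block_of_rank P (rank_by Min P B) = B"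
  unfolding block_of_rank_def using bij_betw_rank_by_Min by (simp add: bij_betw_inv_into_left)

lemma rank_block_of_mem: "j \<in> {1..L} \<Longrightarrow> rank_by Min P (block_of P j) \<in> {1..card P}"
  by (rule rank_by_mem[OF finite_elements[OF finite_atLeastAtMost P] block_of_in(1)[OF P]])

lemma Min_block_of_rank_mem: "k \<in> {1..card P} \<Longrightarrow> Min (block_of_rank P k) \<in> {1..L}"
  using Min_in_partition_block[OF P finite_atLeastAtMost block_of_rank_in]
    partition_block_subset[OF P block_of_rank_in] by blast

lemma block_of_rank_block_of:
  "j \<in> {1..L} \<Longrightarrow> block_of_rank P (rank_by Min P (block_of P j)) = block_of P j"
  using block_of_rank_rank block_of_in(1)[OF P] by simp

lemma block_word_of_partition:
  assumes k: "k \<in> {1..card P}"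
  shows "block L (word_of_partition L P) k = block_of_rank P k"
proof -
  have "label (letter_at (word_of_partition L P) j) = rank_by Min P (block_of P j)"
    if "j \<in> {1..L}" for j
    using letter_at_word_of_partition[OF that] label_partition_letter by simp
  then have "block L (word_of_partition L P) k = {j \<in> {1..L}. rank_by Min P (block_of P j) = k}"
    unfolding block_eq_label by auto
  also have "\<dots> = block_of_rank P k"
  proof
    show "{j \<in> {1..L}. rank_by Min P (block_of P j) = k} \<subseteq> block_of_rank P k"
      using block_of_rank_block_of block_of_in(2)[OF P] by force
    show "block_of_rank P k \<subseteq> {j \<in> {1..L}. rank_by Min P (block_of P j) = k}"
    proof
      fix j assume j: "j \<in> block_of_rank P k"
      then have "j \<in> {1..L}"
        using partition_block_subset[OF P block_of_rank_in[OF k]] by blast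
      moreover have "block_of P j = block_of_rank P k"
        using block_of_eq[OF P block_of_rank_in[OF k] j] .
      ultimately show "j \<in> {j \<in> {1..L}. rank_by Min P (block_of P j) = k}"
        using rank_block_of_rank[OF k] by simp
    qed
  qed
  finally show ?thesis .
qed

lemma blocks_word_of_partition: "blocks L (card P) (word_of_partition L P) = P"
proof -
  have "blocks L (card P) (word_of_partition L P) = block_of_rank P ` {1..card P}"
    unfolding blocks_def using block_word_of_partition by simp
  also have "\<dots> = P"
    unfolding block_of_rank_def using bij_betw_rank_by_Min
    by (simp add: bij_betw_inv_into bij_betw_imp_surj_on)
  finally show ?thesis .
qed

lemma Min_block_of_rank_1:
  assumes "1 \<le> card P"
  shows "Min (block_of_rank P 1) = 1"
proof -
  have one: "1 \<in> {1..card P}"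
    using assms by simp
  define B where "B = block_of_rank P 1"
  have B: "B \<in> P"
    unfolding B_def using block_of_rank_in[OF one] .
  have Min_B: "Min B \<in> {1..L}"
    unfolding B_def using Min_block_of_rank_mem[OF one] .
  then have one_L: "1 \<in> {1..L}"
    by simp
  define B1 where "B1 = block_of P 1"
  have B1: "B1 \<in> P" "1 \<in> B1"
    unfolding B1_def using block_of_in[OF P one_L] by simp_all
  then have "Min B1 \<le> 1"
    using finite_partition_block[OF P finite_atLeastAtMost] by simp
  moreover have "\<not> rank_by Min P B1 < rank_by Min P B"
    using rank_block_of_rank[OF one] rank_block_of_mem[OF one_L] unfolding B_def B1_def by simp
  then have "\<not> Min B1 < Min B"
    using rank_by_less_iff[OF finite_elements[OF finite_atLeastAtMost P] B1(1) B, of Min] by simp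
  ultimately have "Min B \<le> 1"
    by simp
  with Min_B show ?thesis
    unfolding B_def by simp
qed

lemma letter_at_Min_block_of_rank:
  assumes k: "k \<in> {1..card P}"
  shows "letter_at (word_of_partition L P) (Min (block_of_rank P k)) = Bullet k"
proof -
  have B: "block_of_rank P k \<in> P"
    using block_of_rank_in[OF k] .
  have "block_of P (Min (block_of_rank P k)) = block_of_rank P k"
    using block_of_eq[OF P B Min_in_partition_block[OF P finite_atLeastAtMost B]] .
  then show ?thesis
    using letter_at_word_of_partition[OF Min_block_of_rank_mem[OF k]] rank_block_of_rank[OF k]
    by (simp add: partition_letter_eq_Bullet_iff)
qed

lemma Min_block_of_rank_less:
  assumes j: "j \<in> {1..L}" and box: "letter_at (word_of_partition L P) j = Box i"
  shows "Min (block_of_rank P i) < j"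
proof -
  have "j \<noteq> Min (block_of P j)" and "block_of_rank P i = block_of P j"
    using box letter_at_word_of_partition[OF j] block_of_rank_block_of[OF j]
    by (auto simp: partition_letter_eq_Box_iff)
  moreover have "Min (block_of P j) \<le> j"
    using block_of_in[OF P j] finite_partition_block[OF P finite_atLeastAtMost] by simp
  ultimately show ?thesis
    by simp
qed

lemma canonical_word_of_partition:
  assumes "1 \<le> card P"
  shows "canonical_word L (card P) (word_of_partition L P) (\<lambda>k. Min (block_of_rank P k))"
proof unfold_locales
  let ?w = "word_of_partition L P" and ?b = "\<lambda>k. Min (block_of_rank P k)"
  show "length ?w = L"
    by (rule length_word_of_partition)
  show "valid_letter (card P) c" if "c \<in> set ?w" for c
    using that rank_block_of_mem
    by (auto simp: word_of_partition_def valid_letter_iff_label label_partition_letter)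
  show "?b k \<in> {1..L}" if "k \<in> {1..card P}" for k
    using Min_block_of_rank_mem[OF that] .
  show "letter_at ?w (?b k) = Bullet k" if "k \<in> {1..card P}" for k
    using letter_at_Min_block_of_rank[OF that] .
  show "j = ?b k" if "j \<in> {1..L}" and "letter_at ?w j = Bullet k" for j k
    using that letter_at_word_of_partition block_of_rank_block_of
    by (auto simp: partition_letter_eq_Bullet_iff)
  show "?b 1 = 1"
    using Min_block_of_rank_1[OF assms] .
  show "?b k < ?b (Suc k)" if "k \<in> {1..<card P}" for k
  proof -
    have "k \<in> {1..card P}" and "Suc k \<in> {1..card P}"
      using that by auto
    then show ?thesis
      using rank_by_less_iff[OF finite_elements[OF finite_atLeastAtMost P]
          block_of_rank_in block_of_rank_in, of k "Suc k" Min]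
        rank_block_of_rank by simp
  qed
  show "?b i < j" if "j \<in> {1..L}" and "letter_at ?w j = Box i" for j i
    using Min_block_of_rank_less[OF that] .
qed (fact assms)

end

theorem proposition5p6:
  fixes L n :: nat
  assumes "1 \<le> n" and "n \<le> L"
  shows "bij_betw (blocks L n) (Omega'1 L n)
           {P. partition_on {1..L} P \<and> card P = n}"
proof (rule bij_betw_byWitness[where f' = "word_of_partition L"])
  have canonical: "canonical_word L n w (bpos L w)" if "w \<in> Omega'1 L n" for w
    using Omega'1_iff_canonical_word assms(1) that by blast
  show "\<forall>w\<in>Omega'1 L n. word_of_partition L (blocks L n w) = w"
    using canonical canonical_word.word_of_partition_blocks by blast
  show "blocks L n ` Omega'1 L n \<subseteq> {P. partition_on {1..L} P \<and> card P = n}"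
    using canonical canonical_word.partition_on_blocks canonical_word.card_blocks by blast
  show "\<forall>P\<in>{P. partition_on {1..L} P \<and> card P = n}. blocks L n (word_of_partition L P) = P"
    using blocks_word_of_partition by blast
  show "word_of_partition L ` {P. partition_on {1..L} P \<and> card P = n} \<subseteq> Omega'1 L n"
    using canonical_word_of_partition canonical_word.in_Omega'1 assms(1) by blast
qed

end
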